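(* Assume $K$ is a field and $\tau_{(i)}\neq0$, $\eta_{(i)}\neq-1_K$ for all $i\in\Omega$. Then the following are equivalent: (1) for any $C,D\in\mathcal{I}(\overline{\mathbf{P}})$, $|C|=|D|$ implies $\pi(\Omega,C)=\pi(\Omega,D)$; (2) for any $C,D\in\mathcal{I}(\overline{\mathbf{P}})$, $\pi(\Omega,C)=\pi(\Omega,D)$ if and only if $|C|=|D|$; (3) $\mathbf{P}$ is hierarchical, and for any $u,v\in\Omega$ with $\mathrm{len}(u)=\mathrm{len}(v)$ we have $\eta_{(u)}=\eta_{(v)}$.
   Context: $\Omega$ is a finite set and $\mathbf{P}=(\Omega,\preccurlyeq_{\mathbf{P}})$ a poset; $\overline{\mathbf{P}}$ is its dual poset, and $\mathcal{I}(\overline{\mathbf{P}})$ is the set of ideals of $\overline{\mathbf{P}}$ (up-closed subsets of $\mathbf{P}$). For $Y\subseteq\Omega$: $\max(Y)$ is the set of maximal elements of $Y$ w.r.t. $\preccurlyeq_{\mathbf{P}}$ and $\mathcal{I}(Y)$ is the set of down-closed subsets of $Y$ with the induced order. $\tau,\eta\in K^{\Omega}$. For $D,I\subseteq\Omega$, $\varphi(D,I)=(-1)^{|I\cap D|}\big(\prod_{i\in I-\max(I)}\tau_{(i)}\big)\big(\prod_{i\in\max(I)-D}\eta_{(i)}\big)$ if $I\cap D\subseteq\max(I)$, and $0$ otherwise; for $D\subseteq Y\subseteq\Omega$, $\pi(Y,D)=\sum_{I\in\mathcal{I}(Y)}\varphi(D,I)x^{|I|}\in K[x]$. $\mathrm{len}(y)$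 is the largest cardinality of a chain in $\mathbf{P}$ with greatest element $y$; $\mathbf{P}$ is hierarchical if $\mathrm{len}(u)+1\leqslant\mathrm{len}(v)$ implies $u\preccurlyeq_{\mathbf{P}}v$. *)

theory Defs
  imports "HOL-Computational_Algebra.Polynomial"
begin

definition poset_on :: "'a set \<Rightarrow> ('a \<Rightarrow> 'a \<Rightarrow> bool) \<Rightarrow> bool" where
  "poset_on \<Omega> le \<longleftrightarrow>
     (\<forall>a\<in>\<Omega>. le a a) \<and>
     (\<forall>a\<in>\<Omega>. \<forall>b\<in>\<Omega>. le a b \<and> le b a \<longrightarrow> a = b) \<and>
     (\<forall>a\<in>\<Omega>. \<forall>b\<in>\<Omega>. \<forall>c\<in>\<Omega>. le a b \<and> le b c \<longrightarrow> le a c)"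

definition down_sets :: "('a \<Rightarrow> 'a \<Rightarrow> bool) \<Rightarrow> 'a set \<Rightarrow> 'a set set" where
  "down_sets le Y = {I. I \<subseteq> Y \<and> (\<forall>a\<in>I. \<forall>b\<in>Y. le b a \<longrightarrow> b \<in> I)}"

text \<open>Ideals of the dual poset: up-closed subsets of Omega.\<close>
definition up_sets :: "('a \<Rightarrow> 'a \<Rightarrow> bool) \<Rightarrow> 'a set \<Rightarrow> 'a set set" where
  "up_sets le \<Omega> = {C. C \<subseteq> \<Omega> \<and> (\<forall>a\<in>C. \<forall>b\<in>\<Omega>. le a b \<longrightarrow> b \<in> C)}"

definition maxs :: "('a \<Rightarrow> 'a \<Rightarrow> bool) \<Rightarrow> 'a set \<Rightarrow> 'a set" where
  "maxs le Y = {y\<in>Y. \<forall>z\<in>Y. le y z \<longrightarrow> z = y}"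

definition phi :: "('a \<Rightarrow> 'a \<Rightarrow> bool) \<Rightarrow> ('a \<Rightarrow> 'k::field) \<Rightarrow> ('a \<Rightarrow> 'k) \<Rightarrow> 'a set \<Rightarrow> 'a set \<Rightarrow> 'k" where
  "phi le \<tau> \<eta> D I =
     (if I \<inter> D \<subseteq> maxs le I
      then (-1) ^ card (I \<inter> D) * (\<Prod>i\<in>I - maxs le I. \<tau> i) * (\<Prod>i\<in>maxs le I - D. \<eta> i)
      else 0)"

definition pi_poly :: "('a \<Rightarrow> 'a \<Rightarrow> bool) \<Rightarrow> ('a \<Rightarrow> 'k::field) \<Rightarrow> ('a \<Rightarrow> 'k) \<Rightarrow> 'a set \<Rightarrow> 'a set \<Rightarrow> 'k poly" where
  "pi_poly le \<tau> \<eta> Y D = (\<Sum>I\<in>down_sets le Y. monom (phi le \<tau> \<eta> D I) (card I))"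

definition chain_on :: "('a \<Rightarrow> 'a \<Rightarrow> bool) \<Rightarrow> 'a set \<Rightarrow> bool" where
  "chain_on le C \<longleftrightarrow> (\<forall>a\<in>C. \<forall>b\<in>C. le a b \<or> le b a)"

definition len :: "'a set \<Rightarrow> ('a \<Rightarrow> 'a \<Rightarrow> bool) \<Rightarrow> 'a \<Rightarrow> nat" where
  "len \<Omega> le y = Max {card C | C. C \<subseteq> \<Omega> \<and> chain_on le C \<and> y \<in> C \<and> (\<forall>c\<in>C. le c y)}"

definition hierarchical :: "'a set \<Rightarrow> ('a \<Rightarrow> 'a \<Rightarrow> bool) \<Rightarrow> bool" where
  "hierarchical \<Omega> le \<longleftrightarrow>
     (\<forall>u\<in>\<Omega>. \<forall>v\<in>\<Omega>. len \<Omega> le u + 1 \<le> len \<Omega> le v \<longrightarrow> le u v)"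

end

theory Submission
  imports Defs
begin

(*
  Write U, V for the principal ideals {y. y <= u} and {y. y <= v}.

  (1) implies (3).  If u, v are incomparable and |U| <= |V|, the up-sets
  insert u (Omega - (U Un V)) and insert v (Omega - (U Un V)) have the same size, so their
  polynomials agree.  In the coefficient of x^|U| they differ only in the terms of the ideals U
  and, if |V| = |U|, V; comparing these terms gives |U| = |V| and
  (1 + eta u) * prod tau (U - {u}) = (1 + eta v) * prod tau (V - {v}).
  Equal ideal sizes for all incomparable pairs make P hierarchical, and in a hierarchical poset
  U - {u} = V - {v} whenever len u = len v, whence eta u = eta v.

  (3) implies (2).  A hierarchical poset is ordered by levels: x <= y iff x = y or len x < len y.
  Its top level L is an antichain above all of B = Omega - L, and eta is a constant e on L.
  Then pi(Omega, D) = pi(B, D - L) if D meets B, while for D contained in L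
    pi(Omega, D) = pi(B, {}) + prod tau B * x^|B| * ((1 - x)^|D| * (1 + e x)^(|L| - |D|) - 1).
  Since 1 + e <> 0, the multiplicity of the root 1 recovers |D| in the second case, a degree
  count separates the two cases, and induction on |Omega|, applied to B, handles the first.
*)

section \<open>Principal ideals and up-sets\<close>

lemma poset_on_refl: "poset_on \<Omega> le \<Longrightarrow> a \<in> \<Omega> \<Longrightarrow> le a a"
  unfolding poset_on_def by blast

lemma poset_on_antisym:
  "poset_on \<Omega> le \<Longrightarrow> a \<in> \<Omega> \<Longrightarrow> b \<in> \<Omega> \<Longrightarrow> le a b \<Longrightarrow> le b a \<Longrightarrow> a = b"
  unfolding poset_on_def by blast

lemma poset_on_trans:
  "poset_on \<Omega> le \<Longrightarrow> a \<in> \<Omega> \<Longrightarrow> b \<in> \<Omega> \<Longrightarrow> c \<in> \<Omega> \<Longrightarrow> le a b \<Longrightarrow> le b c \<Longrightarrow> le a c"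
  unfolding poset_on_def by blast

definition principal_ideal :: "'a set \<Rightarrow> ('a \<Rightarrow> 'a \<Rightarrow> bool) \<Rightarrow> 'a \<Rightarrow> 'a set" where
  "principal_ideal \<Omega> le u = {y\<in>\<Omega>. le y u}"

lemma mem_principal_ideal [simp]: "y \<in> principal_ideal \<Omega> le u \<longleftrightarrow> y \<in> \<Omega> \<and> le y u"
  by (simp add: principal_ideal_def)

lemma finite_principal_ideal [simp]: "finite \<Omega> \<Longrightarrow> finite (principal_ideal \<Omega> le u)"
  by (simp add: principal_ideal_def)

lemma principal_ideal_in_down_sets:
  "poset_on \<Omega> le \<Longrightarrow> u \<in> \<Omega> \<Longrightarrow> principal_ideal \<Omega> le u \<in> down_sets le \<Omega>"
  unfolding down_sets_def by (auto intro: poset_on_trans)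

lemma principal_ideal_subset_down_set:
  "I \<in> down_sets le \<Omega> \<Longrightarrow> u \<in> I \<Longrightarrow> principal_ideal \<Omega> le u \<subseteq> I"
  unfolding down_sets_def by auto

lemma down_set_eq_principal_ideal:
  assumes "finite \<Omega>" "I \<in> down_sets le \<Omega>" "u \<in> I" "card I \<le> card (principal_ideal \<Omega> le u)"
  shows "I = principal_ideal \<Omega> le u"
proof -
  have "finite I" using assms(1,2) unfolding down_sets_def by (auto intro: finite_subset)
  then show ?thesis
    using card_seteq principal_ideal_subset_down_set assms(2-4) by metis
qed

lemma maxs_principal_ideal:
  "poset_on \<Omega> le \<Longrightarrow> u \<in> \<Omega> \<Longrightarrow> maxs le (principal_ideal \<Omega> le u) = {u}"
  unfolding maxs_def using poset_on_refl[of \<Omega> le u] by (auto intro: poset_on_antisym)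

lemma in_maxs_union_principal_ideals:
  assumes po: "poset_on \<Omega> le" and u: "u \<in> \<Omega>" and v: "v \<in> \<Omega>" and "\<not> le u v"
  shows "u \<in> maxs le (principal_ideal \<Omega> le u \<union> principal_ideal \<Omega> le v)"
  unfolding maxs_def
proof (intro CollectI conjI ballI impI)
  show "u \<in> principal_ideal \<Omega> le u \<union> principal_ideal \<Omega> le v"
    using poset_on_refl[OF po u] u by simp
next
  fix z assume z: "z \<in> principal_ideal \<Omega> le u \<union> principal_ideal \<Omega> le v" and "le u z"
  show "z = u"
  proof (cases "le z u")
    case True
    then show ?thesis using poset_on_antisym[OF po] z u \<open>le u z\<close> by auto
  next
    case False
    then have "le z v" "z \<in> \<Omega>" using z by auto
    then show ?thesis using poset_on_trans[OF po u _ v] \<open>le u z\<close> \<open>\<not> le u v\<close> by blast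
  qed
qed

lemma insert_diff_down_set_in_up_sets:
  assumes S: "S \<in> down_sets le \<Omega>" and u: "u \<in> maxs le S"
  shows "insert u (\<Omega> - S) \<in> up_sets le \<Omega>"
  unfolding up_sets_def
proof (intro CollectI conjI ballI impI)
  show "insert u (\<Omega> - S) \<subseteq> \<Omega>" using S u unfolding down_sets_def maxs_def by blast
next
  fix a b assume a: "a \<in> insert u (\<Omega> - S)" and b: "b \<in> \<Omega>" and "le a b"
  show "b \<in> insert u (\<Omega> - S)"
  proof (cases "b \<in> S")
    case True
    have "a = u"
    proof (rule ccontr)
      assume "a \<noteq> u"
      then have "a \<in> \<Omega>" "a \<notin> S" using a by auto
      then show False using S True \<open>le a b\<close> unfolding down_sets_def by blast
    qed
    then show ?thesis using u True \<open>le a b\<close> unfolding maxs_def by blast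
  qed (use b in blast)
qed

lemma insert_diff_principal_ideals_in_up_sets:
  assumes "poset_on \<Omega> le" "u \<in> \<Omega>" "v \<in> \<Omega>" "\<not> le u v"
  shows "insert u (\<Omega> - (principal_ideal \<Omega> le u \<union> principal_ideal \<Omega> le v)) \<in> up_sets le \<Omega>"
proof (rule insert_diff_down_set_in_up_sets)
  show "principal_ideal \<Omega> le u \<union> principal_ideal \<Omega> le v \<in> down_sets le \<Omega>"
    using principal_ideal_in_down_sets[OF assms(1,2)] principal_ideal_in_down_sets[OF assms(1,3)]
    unfolding down_sets_def by blast
qed (rule in_maxs_union_principal_ideals[OF assms])

section \<open>Coefficients of pi and incomparable elements\<close>

lemma finite_down_sets: "finite Y \<Longrightarrow> finite (down_sets le Y)"
  unfolding down_sets_def by (rule finite_subset[of _ "Pow Y"]) auto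

lemma coeff_pi_poly:
  assumes "finite Y"
  shows "coeff (pi_poly le \<tau> \<eta> Y D) k = (\<Sum>I\<in>{I\<in>down_sets le Y. card I = k}. phi le \<tau> \<eta> D I)"
  unfolding pi_poly_def
  by (simp add: coeff_sum coeff_monom sum.inter_filter[OF finite_down_sets[OF assms]] eq_commute)

lemma degree_pi_poly_le: "finite Y \<Longrightarrow> degree (pi_poly le \<tau> \<eta> Y D) \<le> card Y"
  unfolding pi_poly_def down_sets_def
  by (intro degree_sum_le finite_subset[OF _ finite_Pow_iff[THEN iffD2]])
     (auto intro: order.trans[OF degree_monom_le] card_mono)

lemma phi_cong: "I \<inter> A = I \<inter> B \<Longrightarrow> phi le \<tau> \<eta> A I = phi le \<tau> \<eta> B I"
proof -
  assume "I \<inter> A = I \<inter> B"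
  moreover have "maxs le I \<subseteq> I" unfolding maxs_def by blast
  ultimately have "maxs le I - A = maxs le I - B" by blast
  with \<open>I \<inter> A = I \<inter> B\<close> show ?thesis unfolding phi_def by simp
qed

lemma coeff_pi_poly_diff:
  assumes "finite Y"
  shows "coeff (pi_poly le \<tau> \<eta> Y A) k - coeff (pi_poly le \<tau> \<eta> Y A') k
    = (\<Sum>I\<in>{I\<in>down_sets le Y. card I = k \<and> I \<inter> A \<noteq> I \<inter> A'}. phi le \<tau> \<eta> A I - phi le \<tau> \<eta> A' I)"
proof -
  have "coeff (pi_poly le \<tau> \<eta> Y A) k - coeff (pi_poly le \<tau> \<eta> Y A') k
      = (\<Sum>I\<in>{I\<in>down_sets le Y. card I = k}. phi le \<tau> \<eta> A I - phi le \<tau> \<eta> A' I)"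
    unfolding coeff_pi_poly[OF assms] by (simp add: sum_subtractf)
  also have "\<dots> = (\<Sum>I\<in>{I\<in>down_sets le Y. card I = k \<and> I \<inter> A \<noteq> I \<inter> A'}. phi le \<tau> \<eta> A I - phi le \<tau> \<eta> A' I)"
    using finite_down_sets[OF assms] by (intro sum.mono_neutral_right) (auto dest: phi_cong)
  finally show ?thesis .
qed

lemma phi_principal_ideal:
  assumes "poset_on \<Omega> le" "u \<in> \<Omega>" "A \<inter> principal_ideal \<Omega> le u \<subseteq> {u}"
  shows "phi le \<tau> \<eta> A (principal_ideal \<Omega> le u) =
    (if u \<in> A then - prod \<tau> (principal_ideal \<Omega> le u - {u})
     else prod \<tau> (principal_ideal \<Omega> le u - {u}) * \<eta> u)"
proof -
  have u: "u \<in> principal_ideal \<Omega> le u" using assms(1,2) by (simp add: poset_on_refl)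
  show ?thesis
  proof (cases "u \<in> A")
    case True
    then have "principal_ideal \<Omega> le u \<inter> A = {u}" "{u} - A = {}" using u assms(3) by auto
    then show ?thesis unfolding phi_def maxs_principal_ideal[OF assms(1,2)] using True by simp
  next
    case False
    then have "principal_ideal \<Omega> le u \<inter> A = {}" "{u} - A = {u}" using assms(3) by auto
    then show ?thesis unfolding phi_def maxs_principal_ideal[OF assms(1,2)] using False by simp
  qed
qed

lemma coeff_pi_poly_swap_incomparable:
  fixes \<tau> \<eta> :: "'a \<Rightarrow> 'k::field"
  assumes fin: "finite \<Omega>" and po: "poset_on \<Omega> le"
    and u: "u \<in> \<Omega>" and v: "v \<in> \<Omega>" and "\<not> le u v" "\<not> le v u"
    and card_le: "card (principal_ideal \<Omega> le u) \<le> card (principal_ideal \<Omega> le v)"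
  defines "U \<equiv> principal_ideal \<Omega> le u" and "V \<equiv> principal_ideal \<Omega> le v"
  defines "Au \<equiv> insert u (\<Omega> - (U \<union> V))" and "Av \<equiv> insert v (\<Omega> - (U \<union> V))"
  shows "coeff (pi_poly le \<tau> \<eta> \<Omega> Au) (card U) - coeff (pi_poly le \<tau> \<eta> \<Omega> Av) (card U)
    = (if card V = card U then (1 + \<eta> v) * prod \<tau> (V - {v}) else 0) - (1 + \<eta> u) * prod \<tau> (U - {u})"
proof -
  have uU: "u \<in> U" and vV: "v \<in> V" using u v po unfolding U_def V_def by (auto intro: poset_on_refl)
  have uV: "u \<notin> V" and vU: "v \<notin> U" using \<open>\<not> le u v\<close> \<open>\<not> le v u\<close> unfolding U_def V_def by auto
  have "Au \<inter> U \<subseteq> {u}" "Av \<inter> U \<subseteq> {u}" "Au \<inter> V \<subseteq> {v}" "Av \<inter> V \<subseteq> {v}"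
    unfolding Au_def Av_def using vU uV by auto
  moreover have "u \<in> Au" "u \<notin> Av" "v \<notin> Au" "v \<in> Av"
    unfolding Au_def Av_def using uU vV uV by auto
  ultimately have "phi le \<tau> \<eta> Au U = - prod \<tau> (U - {u})" "phi le \<tau> \<eta> Av U = prod \<tau> (U - {u}) * \<eta> u"
    "phi le \<tau> \<eta> Au V = prod \<tau> (V - {v}) * \<eta> v" "phi le \<tau> \<eta> Av V = - prod \<tau> (V - {v})"
    using phi_principal_ideal[OF po u, folded U_def, of Au] phi_principal_ideal[OF po u, folded U_def, of Av]
      phi_principal_ideal[OF po v, folded V_def, of Au] phi_principal_ideal[OF po v, folded V_def, of Av]
    by simp_all
  then have phi_U: "phi le \<tau> \<eta> Au U - phi le \<tau> \<eta> Av U = - ((1 + \<eta> u) * prod \<tau> (U - {u}))"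
    and phi_V: "phi le \<tau> \<eta> Au V - phi le \<tau> \<eta> Av V = (1 + \<eta> v) * prod \<tau> (V - {v})"
    by (simp_all add: algebra_simps)
  have "{I\<in>down_sets le \<Omega>. card I = card U \<and> I \<inter> Au \<noteq> I \<inter> Av}
      = (if card V = card U then {U, V} else {U})"
  proof (intro equalityI subsetI)
    fix I assume "I \<in> {I\<in>down_sets le \<Omega>. card I = card U \<and> I \<inter> Au \<noteq> I \<inter> Av}"
    then have I: "I \<in> down_sets le \<Omega>" "card I = card U" "u \<in> I \<or> v \<in> I"
      unfolding Au_def Av_def by auto
    then show "I \<in> (if card V = card U then {U, V} else {U})"
      using down_set_eq_principal_ideal[OF fin I(1)] card_le unfolding U_def V_def by auto
  next
    fix I assume "I \<in> (if card V = card U then {U, V} else {U})"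
    then show "I \<in> {I\<in>down_sets le \<Omega>. card I = card U \<and> I \<inter> Au \<noteq> I \<inter> Av}"
      using principal_ideal_in_down_sets[OF po u, folded U_def] principal_ideal_in_down_sets[OF po v, folded V_def]
        \<open>u \<in> Au\<close> \<open>u \<notin> Av\<close> \<open>v \<notin> Au\<close> \<open>v \<in> Av\<close> uU vV
      by (auto split: if_splits)
  qed
  moreover have "U \<noteq> V" using uU uV by blast
  ultimately show ?thesis
    unfolding coeff_pi_poly_diff[OF fin] using phi_U phi_V by simp
qed

lemma one_plus_neq_zero: "(x::'k::field) \<noteq> -1 \<Longrightarrow> 1 + x \<noteq> 0"
  by (simp add: add_eq_0_iff)

lemma incomparable_principal_ideals:
  fixes \<tau> \<eta> :: "'a \<Rightarrow> 'k::field"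
  assumes fin: "finite \<Omega>" and po: "poset_on \<Omega> le"
    and \<tau>: "\<forall>i\<in>\<Omega>. \<tau> i \<noteq> 0" and \<eta>: "\<forall>i\<in>\<Omega>. \<eta> i \<noteq> -1"
    and card_imp_pi: "\<forall>C\<in>up_sets le \<Omega>. \<forall>D\<in>up_sets le \<Omega>.
      card C = card D \<longrightarrow> pi_poly le \<tau> \<eta> \<Omega> C = pi_poly le \<tau> \<eta> \<Omega> D"
    and u: "u \<in> \<Omega>" and v: "v \<in> \<Omega>" and "\<not> le u v" "\<not> le v u"
  shows "card (principal_ideal \<Omega> le u) = card (principal_ideal \<Omega> le v)
    \<and> (1 + \<eta> u) * prod \<tau> (principal_ideal \<Omega> le u - {u})
      = (1 + \<eta> v) * prod \<tau> (principal_ideal \<Omega> le v - {v})"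
proof -
  have balanced: "card V = card U \<and> (1 + \<eta> u) * prod \<tau> (U - {u}) = (1 + \<eta> v) * prod \<tau> (V - {v})"
    if u: "u \<in> \<Omega>" and v: "v \<in> \<Omega>" and "\<not> le u v" "\<not> le v u" and card_le: "card U \<le> card V"
      and U: "U = principal_ideal \<Omega> le u" and V: "V = principal_ideal \<Omega> le v" for u v U V
  proof -
    have "insert u (\<Omega> - (U \<union> V)) \<in> up_sets le \<Omega>" "insert v (\<Omega> - (U \<union> V)) \<in> up_sets le \<Omega>"
      using insert_diff_principal_ideals_in_up_sets[OF po u v \<open>\<not> le u v\<close>]
        insert_diff_principal_ideals_in_up_sets[OF po v u \<open>\<not> le v u\<close>]
      unfolding U V by (simp_all add: Un_commute)
    moreover have "u \<in> U \<union> V" "v \<in> U \<union> V" using u v poset_on_refl[OF po] unfolding U V by auto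
    then have "card (insert u (\<Omega> - (U \<union> V))) = card (insert v (\<Omega> - (U \<union> V)))"
      using fin by simp
    ultimately have "pi_poly le \<tau> \<eta> \<Omega> (insert u (\<Omega> - (U \<union> V)))
        = pi_poly le \<tau> \<eta> \<Omega> (insert v (\<Omega> - (U \<union> V)))"
      using card_imp_pi by blast
    then have "(if card V = card U then (1 + \<eta> v) * prod \<tau> (V - {v}) else 0)
        = (1 + \<eta> u) * prod \<tau> (U - {u})"
      using coeff_pi_poly_swap_incomparable[OF fin po u v \<open>\<not> le u v\<close> \<open>\<not> le v u\<close>, of \<tau> \<eta>]
        card_le unfolding U V by simp
    moreover have "(1 + \<eta> u) * prod \<tau> (U - {u}) \<noteq> 0"
      using one_plus_neq_zero \<eta> \<tau> u fin unfolding U by (auto simp: prod_zero_iff)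
    ultimately show ?thesis by (auto split: if_splits)
  qed
  show ?thesis
    using balanced[OF u v \<open>\<not> le u v\<close> \<open>\<not> le v u\<close> _ refl refl]
      balanced[OF v u \<open>\<not> le v u\<close> \<open>\<not> le u v\<close> _ refl refl]
    by linarith
qed

section \<open>Longest chains and hierarchical posets\<close>

lemma finite_chain_cards:
  "finite \<Omega> \<Longrightarrow> finite {card C | C. C \<subseteq> \<Omega> \<and> chain_on le C \<and> y \<in> C \<and> (\<forall>c\<in>C. le c y)}"
  by (rule finite_subset[of _ "card ` Pow \<Omega>"]) auto

lemma card_chain_le_len:
  assumes "finite \<Omega>" "C \<subseteq> \<Omega>" "chain_on le C" "y \<in> C" "\<forall>c\<in>C. le c y"
  shows "card C \<le> len \<Omega> le y"
  unfolding len_def by (rule Max_ge[OF finite_chain_cards[OF assms(1)]]) (use assms in auto)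

lemma longest_chain_exists:
  assumes fin: "finite \<Omega>" and po: "poset_on \<Omega> le" and y: "y \<in> \<Omega>"
  obtains C where "C \<subseteq> \<Omega>" "chain_on le C" "y \<in> C" "\<forall>c\<in>C. le c y" "card C = len \<Omega> le y"
proof -
  let ?lens = "{card C | C. C \<subseteq> \<Omega> \<and> chain_on le C \<and> y \<in> C \<and> (\<forall>c\<in>C. le c y)}"
  have "finite ?lens" using fin by (rule finite_chain_cards)
  moreover have "card {y} \<in> ?lens"
    using y poset_on_refl[OF po y] unfolding chain_on_def by blast
  ultimately have "len \<Omega> le y \<in> ?lens"
    unfolding len_def by (intro Max_in) auto
  then show ?thesis using that by auto
qed

lemma len_strict_mono:
  assumes fin: "finite \<Omega>" and po: "poset_on \<Omega> le" and x: "x \<in> \<Omega>" and y: "y \<in> \<Omega>"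
    and "le x y" "x \<noteq> y"
  shows "len \<Omega> le x < len \<Omega> le y"
proof -
  obtain C where C: "C \<subseteq> \<Omega>" "chain_on le C" "x \<in> C" "\<forall>c\<in>C. le c x" "card C = len \<Omega> le x"
    using longest_chain_exists[OF fin po x] .
  have below_y: "\<forall>c\<in>insert y C. le c y"
    using C poset_on_trans[OF po _ x y] poset_on_refl[OF po y] \<open>le x y\<close> by blast
  then have "chain_on le (insert y C)"
    using C(2) unfolding chain_on_def by blast
  then have "card (insert y C) \<le> len \<Omega> le y"
    using card_chain_le_len[OF fin] C(1) y below_y by blast
  moreover have "y \<notin> C"
    using C(4) poset_on_antisym[OF po x y] \<open>le x y\<close> \<open>x \<noteq> y\<close> by blast
  moreover have "finite C" using C(1) fin by (rule finite_subset)
  ultimately show ?thesis using C(5) by simp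
qed

lemma strictly_below_le_incomparable:
  assumes fin: "finite \<Omega>" and po: "poset_on \<Omega> le"
    and card_eq: "\<And>u v. u \<in> \<Omega> \<Longrightarrow> v \<in> \<Omega> \<Longrightarrow> \<not> le u v \<Longrightarrow> \<not> le v u \<Longrightarrow>
      card (principal_ideal \<Omega> le u) = card (principal_ideal \<Omega> le v)"
    and u: "u \<in> \<Omega>" and v: "v \<in> \<Omega>" and "\<not> le u v" "\<not> le v u"
    and w: "w \<in> \<Omega>" "le w v" "w \<noteq> v"
  shows "le w u"
proof (rule ccontr)
  assume "\<not> le w u"
  moreover have "\<not> le u w" using poset_on_trans[OF po u w(1) v] w(2) \<open>\<not> le u v\<close> by blast
  ultimately have "card (principal_ideal \<Omega> le w) = card (principal_ideal \<Omega> le v)"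
    using card_eq[OF w(1) u] card_eq[OF u v \<open>\<not> le u v\<close> \<open>\<not> le v u\<close>] by simp
  moreover have "principal_ideal \<Omega> le w \<subseteq> principal_ideal \<Omega> le v"
    using poset_on_trans[OF po _ w(1) v] w(2) by auto
  moreover have "v \<in> principal_ideal \<Omega> le v" "v \<notin> principal_ideal \<Omega> le w"
    using poset_on_refl[OF po v] poset_on_antisym[OF po v w(1)] v w by auto
  ultimately show False using fin by (metis card_subset_eq finite_principal_ideal)
qed

lemma hierarchical_if_incomparable_card_eq:
  assumes fin: "finite \<Omega>" and po: "poset_on \<Omega> le"
    and card_eq: "\<And>u v. u \<in> \<Omega> \<Longrightarrow> v \<in> \<Omega> \<Longrightarrow> \<not> le u v \<Longrightarrow> \<not> le v u \<Longrightarrow>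
      card (principal_ideal \<Omega> le u) = card (principal_ideal \<Omega> le v)"
  shows "hierarchical \<Omega> le"
  unfolding hierarchical_def
proof (intro ballI impI)
  fix u v assume u: "u \<in> \<Omega>" and v: "v \<in> \<Omega>" and len_less: "len \<Omega> le u + 1 \<le> len \<Omega> le v"
  show "le u v"
  proof (rule ccontr)
    assume "\<not> le u v"
    moreover have "\<not> le v u"
      using len_strict_mono[OF fin po v u] poset_on_refl[OF po u] \<open>\<not> le u v\<close> len_less by fastforce
    ultimately have below_u: "\<forall>c\<in>C - {v}. le c u" if "C \<subseteq> \<Omega>" "\<forall>c\<in>C. le c v" for C
      using strictly_below_le_incomparable[OF fin po card_eq u v] that by blast
    obtain C where C: "C \<subseteq> \<Omega>" "chain_on le C" "v \<in> C" "\<forall>c\<in>C. le c v" "card C = len \<Omega> le v"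
      using longest_chain_exists[OF fin po v] .
    \<comment> \<open>replacing v by u turns a longest chain ending at v into a chain ending at u\<close>
    have "\<forall>c\<in>insert u (C - {v}). le c u"
      using below_u[OF C(1,4)] poset_on_refl[OF po u] by blast
    moreover from this have "chain_on le (insert u (C - {v}))"
      using C(2) unfolding chain_on_def by blast
    ultimately have "card (insert u (C - {v})) \<le> len \<Omega> le u"
      by (intro card_chain_le_len[OF fin]) (use C(1) u in auto)
    moreover have "card (insert u (C - {v})) = card C"
    proof -
      have "finite C" using C(1) fin by (rule finite_subset)
      moreover have "u \<notin> C" using C(4) \<open>\<not> le u v\<close> by blast
      ultimately have "card (insert u (C - {v})) = Suc (card (C - {v}))" by simp
      also have "\<dots> = card C" using \<open>finite C\<close> C(3) by (rule card_Suc_Diff1)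
      finally show ?thesis .
    qed
    ultimately show False using C(5) len_less by simp
  qed
qed

lemma hierarchical_le_iff:
  assumes fin: "finite \<Omega>" and po: "poset_on \<Omega> le" and hier: "hierarchical \<Omega> le"
    and x: "x \<in> \<Omega>" and y: "y \<in> \<Omega>"
  shows "le x y \<longleftrightarrow> x = y \<or> len \<Omega> le x < len \<Omega> le y"
proof
  assume "le x y"
  then show "x = y \<or> len \<Omega> le x < len \<Omega> le y" using len_strict_mono[OF fin po x y] by blast
next
  assume "x = y \<or> len \<Omega> le x < len \<Omega> le y"
  then show "le x y" using poset_on_refl[OF po x] hier x y unfolding hierarchical_def by auto
qed

lemma hierarchical_principal_ideal_diff:
  assumes "finite \<Omega>" "poset_on \<Omega> le" "hierarchical \<Omega> le" "u \<in> \<Omega>"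
  shows "principal_ideal \<Omega> le u - {u} = {w\<in>\<Omega>. len \<Omega> le w < len \<Omega> le u}"
  using hierarchical_le_iff[OF assms(1-3) _ assms(4)] by auto

lemma card_eq_imp_pi_poly_eq_hierarchical:
  fixes \<tau> \<eta> :: "'a \<Rightarrow> 'k::field"
  assumes fin: "finite \<Omega>" and po: "poset_on \<Omega> le"
    and \<tau>: "\<forall>i\<in>\<Omega>. \<tau> i \<noteq> 0" and \<eta>: "\<forall>i\<in>\<Omega>. \<eta> i \<noteq> -1"
    and card_imp_pi: "\<forall>C\<in>up_sets le \<Omega>. \<forall>D\<in>up_sets le \<Omega>.
      card C = card D \<longrightarrow> pi_poly le \<tau> \<eta> \<Omega> C = pi_poly le \<tau> \<eta> \<Omega> D"
  shows "hierarchical \<Omega> le"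
    and "\<And>u v. u \<in> \<Omega> \<Longrightarrow> v \<in> \<Omega> \<Longrightarrow> len \<Omega> le u = len \<Omega> le v \<Longrightarrow> \<eta> u = \<eta> v"
proof -
  note balanced = incomparable_principal_ideals[OF fin po \<tau> \<eta> card_imp_pi]
  show hier: "hierarchical \<Omega> le"
    using hierarchical_if_incomparable_card_eq[OF fin po] balanced by blast
  show "\<eta> u = \<eta> v" if u: "u \<in> \<Omega>" and v: "v \<in> \<Omega>" and len_eq: "len \<Omega> le u = len \<Omega> le v" for u v
  proof (cases "u = v")
    case False
    then have "\<not> le u v" "\<not> le v u"
      using hierarchical_le_iff[OF fin po hier] u v len_eq by auto
    then have "(1 + \<eta> u) * prod \<tau> (principal_ideal \<Omega> le u - {u})
        = (1 + \<eta> v) * prod \<tau> (principal_ideal \<Omega> le u - {u})"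
      using balanced[OF u v] hierarchical_principal_ideal_diff[OF fin po hier] u v len_eq by simp
    moreover have "prod \<tau> (principal_ideal \<Omega> le u - {u}) \<noteq> 0"
      using \<tau> fin by (auto simp: prod_zero_iff)
    ultimately show ?thesis by simp
  qed simp
qed

section \<open>An antichain on top of a poset\<close>

lemma prod_monom_one:
  "finite T \<Longrightarrow> (\<Prod>x\<in>T. monom (c x) 1) = monom (\<Prod>x\<in>T. c x) (card T)"
  by (induction T rule: finite_induct) (simp_all add: monom_0 one_pCons mult_monom)

lemma sum_Pow_monom_eq_power_prod:
  fixes e :: "'k::field"
  assumes fin: "finite L" and "D \<subseteq> L"
  shows "(\<Sum>T\<in>Pow L. monom ((-1) ^ card (T \<inter> D) * e ^ card (T - D)) (card T))
    = [:1, -1:] ^ card D * [:1, e:] ^ (card L - card D)"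
proof -
  define c where "c x = (if x \<in> D then -1 else e)" for x
  have prod_c: "(\<Prod>x\<in>T. c x) = (-1) ^ card (T \<inter> D) * e ^ card (T - D)" if "finite T" for T
    unfolding c_def using that by (simp add: prod.If_cases Diff_eq)
  have "(\<Sum>T\<in>Pow L. monom ((-1) ^ card (T \<inter> D) * e ^ card (T - D)) (card T))
      = (\<Sum>T\<in>Pow L. (\<Prod>x\<in>T. monom (c x) 1) * (\<Prod>x\<in>L - T. 1))"
  proof (intro sum.cong refl)
    fix T assume "T \<in> Pow L"
    then have "finite T" using fin by (auto intro: finite_subset)
    then show "monom ((-1) ^ card (T \<inter> D) * e ^ card (T - D)) (card T)
        = (\<Prod>x\<in>T. monom (c x) 1) * (\<Prod>x\<in>L - T. 1)"
      by (simp only: prod_monom_one prod_c prod.neutral_const mult_1_right)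
  qed
  also have "\<dots> = (\<Prod>x\<in>L. monom (c x) 1 + 1)"
    using fin by (rule prod_add[symmetric])
  also have "\<dots> = (\<Prod>x\<in>L. if x \<in> D then [:1, -1:] else [:1, e:])"
    unfolding c_def by (intro prod.cong) (simp_all add: monom_Suc monom_0 one_pCons)
  also have "\<dots> = [:1, -1:] ^ card D * [:1, e:] ^ (card L - card D)"
    using fin assms(2) by (simp add: prod.If_cases Int_absorb1 card_Diff_subset finite_subset flip: Diff_eq)
  finally show ?thesis .
qed

lemma order_one_power_prod:
  fixes e :: "'k::field"
  assumes "e \<noteq> -1"
  shows "order 1 ([:1, -1:] ^ s * [:1, e:] ^ k) = s"
proof -
  have "[:1, -1:] = smult (-1) [:-1, 1 :: 'k:]" by simp
  then have "[:1, -1:] ^ s = smult ((-1) ^ s) ([:-1, 1 :: 'k:] ^ s)"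
    by (simp only: smult_power)
  then have "order 1 ([:1, -1 :: 'k:] ^ s) = s"
    by (simp add: order_smult order_power_n_n)
  moreover have "order 1 ([:1, e:] ^ k) = 0"
    using one_plus_neq_zero[OF assms] by (intro order_0I) simp
  ultimately show ?thesis by (simp add: order_mult)
qed

lemma power_prod_eq_iff:
  fixes e :: "'k::field"
  assumes "e \<noteq> -1"
  shows "[:1, -1:] ^ s * [:1, e:] ^ (n - s) = [:1, -1:] ^ s' * [:1, e:] ^ (n - s') \<longleftrightarrow> s = s'"
  using order_one_power_prod[OF assms, of s "n - s"] order_one_power_prod[OF assms, of s' "n - s'"]
  by metis

locale antichain_on_top =
  fixes le :: "'a \<Rightarrow> 'a \<Rightarrow> bool" and B L :: "'a set"
  assumes finite_bottom: "finite B" and finite_top: "finite L"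
    and disjoint: "B \<inter> L = {}"
    and bottom_below_top: "x \<in> B \<Longrightarrow> y \<in> L \<Longrightarrow> le x y"
    and top_maximal: "y \<in> L \<Longrightarrow> z \<in> B \<union> L \<Longrightarrow> le y z \<Longrightarrow> z = y"
begin

lemma down_sets_union:
  "down_sets le (B \<union> L) = down_sets le B \<union> (\<lambda>T. B \<union> T) ` (Pow L - {{}})"
proof (intro equalityI subsetI)
  fix I assume I: "I \<in> down_sets le (B \<union> L)"
  show "I \<in> down_sets le B \<union> (\<lambda>T. B \<union> T) ` (Pow L - {{}})"
  proof (cases "I \<inter> L = {}")
    case True
    then have "I \<in> down_sets le B" using I unfolding down_sets_def by blast
    then show ?thesis by blast
  next
    case False
    then have "B \<subseteq> I" using I bottom_below_top unfolding down_sets_def by blast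
    then have "I = B \<union> (I \<inter> L)" using I unfolding down_sets_def by blast
    then show ?thesis using False by blast
  qed
next
  fix I assume "I \<in> down_sets le B \<union> (\<lambda>T. B \<union> T) ` (Pow L - {{}})"
  then show "I \<in> down_sets le (B \<union> L)"
    using top_maximal disjoint unfolding down_sets_def by blast
qed

lemma maxs_union: "T \<subseteq> L \<Longrightarrow> T \<noteq> {} \<Longrightarrow> maxs le (B \<union> T) = T"
  using bottom_below_top top_maximal disjoint unfolding maxs_def by blast

lemma phi_union:
  assumes "T \<subseteq> L" "T \<noteq> {}"
  shows "phi le \<tau> \<eta> D (B \<union> T) =
    (if D \<inter> B = {} then (-1) ^ card (T \<inter> D) * prod \<tau> B * prod \<eta> (T - D) else 0)"
proof -
  have "B \<union> T - T = B" and "(B \<union> T) \<inter> D \<subseteq> T \<longleftrightarrow> D \<inter> B = {}"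
    using assms disjoint by auto
  moreover have "(B \<union> T) \<inter> D = T \<inter> D" if "D \<inter> B = {}" using that by blast
  ultimately show ?thesis unfolding phi_def maxs_union[OF assms] by auto
qed

lemma pi_poly_union:
  "pi_poly le \<tau> \<eta> (B \<union> L) D = pi_poly le \<tau> \<eta> B (D - L)
    + (\<Sum>T\<in>Pow L - {{}}. monom (phi le \<tau> \<eta> D (B \<union> T)) (card B + card T))"
proof -
  have "down_sets le B \<inter> (\<lambda>T. B \<union> T) ` (Pow L - {{}}) = {}"
    using disjoint unfolding down_sets_def by blast
  moreover have "inj_on (\<lambda>T. B \<union> T) (Pow L - {{}})"
    using disjoint by (intro inj_onI) blast
  moreover have "phi le \<tau> \<eta> D I = phi le \<tau> \<eta> (D - L) I" if "I \<in> down_sets le B" for I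
    using that disjoint unfolding down_sets_def by (intro phi_cong) blast
  moreover have "card (B \<union> T) = card B + card T" if "T \<in> Pow L" for T
    using that disjoint finite_bottom finite_top
    by (intro card_Un_disjoint) (auto intro: finite_subset)
  ultimately show ?thesis
    unfolding pi_poly_def down_sets_union
    using finite_down_sets[OF finite_bottom] finite_top
    by (simp add: sum.union_disjoint sum.reindex)
qed

lemma pi_poly_union_meets_bottom:
  "D \<inter> B \<noteq> {} \<Longrightarrow> pi_poly le \<tau> \<eta> (B \<union> L) D = pi_poly le \<tau> \<eta> B (D - L)"
  unfolding pi_poly_union by (simp add: phi_union)

lemma pi_poly_union_top:
  fixes \<tau> \<eta> :: "'a \<Rightarrow> 'k::field"
  assumes "D \<subseteq> L" and \<eta>_top: "\<forall>x\<in>L. \<eta> x = e"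
  shows "pi_poly le \<tau> \<eta> (B \<union> L) D = pi_poly le \<tau> \<eta> B {}
    + monom (prod \<tau> B) (card B) * ([:1, -1:] ^ card D * [:1, e:] ^ (card L - card D) - 1)"
proof -
  define g where "g T = monom ((-1) ^ card (T \<inter> D) * e ^ card (T - D)) (card T)" for T
  have "monom (phi le \<tau> \<eta> D (B \<union> T)) (card B + card T) = monom (prod \<tau> B) (card B) * g T"
    if "T \<in> Pow L - {{}}" for T
  proof -
    have "prod \<eta> (T - D) = (\<Prod>_\<in>T - D. e)" using that \<eta>_top by (intro prod.cong) auto
    then have "prod \<eta> (T - D) = e ^ card (T - D)" by simp
    then show ?thesis
      using that assms(1) disjoint unfolding g_def
      by (auto simp: phi_union mult_monom algebra_simps)
  qed
  then have "(\<Sum>T\<in>Pow L - {{}}. monom (phi le \<tau> \<eta> D (B \<union> T)) (card B + card T))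
      = monom (prod \<tau> B) (card B) * ((\<Sum>T\<in>Pow L. g T) - g {})"
    using finite_top by (simp add: sum_distrib_left sum_diff1 right_diff_distrib)
  also have "g {} = 1" unfolding g_def by (simp add: monom_0 one_pCons)
  also have "(\<Sum>T\<in>Pow L. g T) = [:1, -1:] ^ card D * [:1, e:] ^ (card L - card D)"
    unfolding g_def by (rule sum_Pow_monom_eq_power_prod[OF finite_top assms(1)])
  finally have "(\<Sum>T\<in>Pow L - {{}}. monom (phi le \<tau> \<eta> D (B \<union> T)) (card B + card T))
      = monom (prod \<tau> B) (card B) * ([:1, -1:] ^ card D * [:1, e:] ^ (card L - card D) - 1)" .
  moreover have "D - L = {}" using assms(1) by blast
  ultimately show ?thesis unfolding pi_poly_union by (simp only:)
qed

lemma top_subset_up_set: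
  assumes "D \<in> up_sets le (B \<union> L)" "D \<inter> B \<noteq> {}"
  shows "L \<subseteq> D"
proof
  fix y assume "y \<in> L"
  obtain x where "x \<in> D" "x \<in> B" using assms(2) by blast
  then show "y \<in> D" using assms(1) bottom_below_top[OF \<open>x \<in> B\<close> \<open>y \<in> L\<close>] \<open>y \<in> L\<close>
    unfolding up_sets_def by blast
qed

lemma up_set_diff_top: "D \<in> up_sets le (B \<union> L) \<Longrightarrow> D - L \<in> up_sets le B"
  using disjoint unfolding up_sets_def by blast

lemma pi_poly_union_top_eq_meets_bottom:
  fixes \<tau> \<eta> :: "'a \<Rightarrow> 'k::field"
  assumes "C \<subseteq> L" "D \<inter> B \<noteq> {}"
    and \<tau>: "\<forall>x\<in>B. \<tau> x \<noteq> 0" and \<eta>_top: "\<forall>x\<in>L. \<eta> x = e"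
    and eq: "pi_poly le \<tau> \<eta> (B \<union> L) C = pi_poly le \<tau> \<eta> (B \<union> L) D"
  shows "pi_poly le \<tau> \<eta> B {} = pi_poly le \<tau> \<eta> B (D - L)"
proof -
  define M where "M = monom (prod \<tau> B) (card B)"
  define G where "G = [:1, -1:] ^ card C * [:1, e:] ^ (card L - card C) - 1"
  have "pi_poly le \<tau> \<eta> B {} + M * G = pi_poly le \<tau> \<eta> B (D - L)"
    using eq unfolding M_def G_def pi_poly_union_top[OF assms(1) \<eta>_top]
      pi_poly_union_meets_bottom[OF assms(2)] .
  then have M_G: "M * G = pi_poly le \<tau> \<eta> B (D - L) - pi_poly le \<tau> \<eta> B {}"
    by (metis add_diff_cancel_left')
  have "G = 0"
  proof (rule ccontr)
    assume "G \<noteq> 0"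
    have "prod \<tau> B \<noteq> 0" using \<tau> finite_bottom by (simp add: prod_zero_iff)
    then have "card B + degree G = degree (M * G)"
      using \<open>G \<noteq> 0\<close> unfolding M_def by (simp add: degree_mult_eq degree_monom_eq)
    also have "\<dots> \<le> card B"
      unfolding M_G using degree_diff_le degree_pi_poly_le[OF finite_bottom] by blast
    finally have "degree G = 0" by simp
    moreover have "coeff G 0 = 0" unfolding G_def by (simp add: coeff_mult_0 coeff_0_power)
    ultimately show False using \<open>G \<noteq> 0\<close> by (metis leading_coeff_0_iff)
  qed
  then show ?thesis using M_G by simp
qed

lemma card_up_set_meets_bottom:
  assumes "D \<in> up_sets le (B \<union> L)" "D \<inter> B \<noteq> {}"
  shows "card D = card L + card (D - L)" and "card L < card D"
proof -
  have "finite D" using assms(1) finite_bottom finite_top unfolding up_sets_def by (auto intro: finite_subset)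
  moreover have "L \<subseteq> D" by (rule top_subset_up_set[OF assms])
  ultimately show card_eq: "card D = card L + card (D - L)"
    using finite_top by (simp add: card_Diff_subset card_mono)
  have "D - L \<noteq> {}" using assms(2) disjoint by blast
  then have "card (D - L) > 0" using \<open>finite D\<close> by (simp add: card_gt_0_iff)
  then show "card L < card D" using card_eq by simp
qed

lemma pi_poly_union_top_neq_meets_bottom:
  fixes \<tau> \<eta> :: "'a \<Rightarrow> 'k::field"
  assumes \<tau>: "\<forall>x\<in>B. \<tau> x \<noteq> 0" and \<eta>_top: "\<forall>x\<in>L. \<eta> x = e"
    and bottom: "\<forall>C\<in>up_sets le B. \<forall>D\<in>up_sets le B.
      pi_poly le \<tau> \<eta> B C = pi_poly le \<tau> \<eta> B D \<longleftrightarrow> card C = card D"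
    and "C \<subseteq> L" "D \<in> up_sets le (B \<union> L)" "D \<inter> B \<noteq> {}"
  shows "pi_poly le \<tau> \<eta> (B \<union> L) C \<noteq> pi_poly le \<tau> \<eta> (B \<union> L) D"
proof -
  have "{} \<in> up_sets le B" unfolding up_sets_def by simp
  then have "pi_poly le \<tau> \<eta> B {} = pi_poly le \<tau> \<eta> B (D - L) \<longleftrightarrow> card ({} :: 'a set) = card (D - L)"
    by (rule bottom[rule_format, OF _ up_set_diff_top[OF assms(5)]])
  then have "pi_poly le \<tau> \<eta> B {} \<noteq> pi_poly le \<tau> \<eta> B (D - L)"
    using card_up_set_meets_bottom[OF assms(5,6)] by simp
  then show ?thesis using pi_poly_union_top_eq_meets_bottom[OF assms(4,6) \<tau> \<eta>_top] by blast
qed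

lemma pi_poly_union_eq_iff_card_eq:
  fixes \<tau> \<eta> :: "'a \<Rightarrow> 'k::field"
  assumes \<tau>: "\<forall>x\<in>B. \<tau> x \<noteq> 0" and \<eta>_top: "\<forall>x\<in>L. \<eta> x = e" and "e \<noteq> -1"
    and bottom: "\<forall>C\<in>up_sets le B. \<forall>D\<in>up_sets le B.
      pi_poly le \<tau> \<eta> B C = pi_poly le \<tau> \<eta> B D \<longleftrightarrow> card C = card D"
    and C: "C \<in> up_sets le (B \<union> L)" and D: "D \<in> up_sets le (B \<union> L)"
  shows "pi_poly le \<tau> \<eta> (B \<union> L) C = pi_poly le \<tau> \<eta> (B \<union> L) D \<longleftrightarrow> card C = card D"
proof -
  have "C \<subseteq> L \<or> C \<inter> B \<noteq> {}" "D \<subseteq> L \<or> D \<inter> B \<noteq> {}"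
    using C D unfolding up_sets_def by blast+
  then show ?thesis
  proof (elim disjE)
    assume "C \<subseteq> L" "D \<subseteq> L"
    define M where "M = monom (prod \<tau> B) (card B)"
    have "M \<noteq> 0" unfolding M_def using \<tau> finite_bottom by (simp add: prod_zero_iff)
    have "pi_poly le \<tau> \<eta> (B \<union> L) C = pi_poly le \<tau> \<eta> (B \<union> L) D \<longleftrightarrow>
        M * ([:1, -1:] ^ card C * [:1, e:] ^ (card L - card C) - 1)
        = M * ([:1, -1:] ^ card D * [:1, e:] ^ (card L - card D) - 1)"
      unfolding M_def pi_poly_union_top[OF \<open>C \<subseteq> L\<close> \<eta>_top] pi_poly_union_top[OF \<open>D \<subseteq> L\<close> \<eta>_top]
      by (rule add_left_cancel)
    also have "\<dots> \<longleftrightarrow> card C = card D"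
      using \<open>M \<noteq> 0\<close> power_prod_eq_iff[OF \<open>e \<noteq> -1\<close>] by simp
    finally show ?thesis .
  next
    assume "C \<inter> B \<noteq> {}" "D \<inter> B \<noteq> {}"
    then have "pi_poly le \<tau> \<eta> (B \<union> L) C = pi_poly le \<tau> \<eta> (B \<union> L) D \<longleftrightarrow>
        pi_poly le \<tau> \<eta> B (C - L) = pi_poly le \<tau> \<eta> B (D - L)"
      by (simp add: pi_poly_union_meets_bottom)
    also have "\<dots> \<longleftrightarrow> card (C - L) = card (D - L)"
      by (rule bottom[rule_format, OF up_set_diff_top[OF C] up_set_diff_top[OF D]])
    also have "\<dots> \<longleftrightarrow> card C = card D"
      using card_up_set_meets_bottom(1)[OF C \<open>C \<inter> B \<noteq> {}\<close>]
        card_up_set_meets_bottom(1)[OF D \<open>D \<inter> B \<noteq> {}\<close>] by simp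
    finally show ?thesis .
  next
    assume "C \<subseteq> L" "D \<inter> B \<noteq> {}"
    have "pi_poly le \<tau> \<eta> (B \<union> L) C \<noteq> pi_poly le \<tau> \<eta> (B \<union> L) D"
      by (rule pi_poly_union_top_neq_meets_bottom[OF \<tau> \<eta>_top bottom \<open>C \<subseteq> L\<close> D \<open>D \<inter> B \<noteq> {}\<close>])
    moreover have "card C \<noteq> card D"
      using card_mono[OF finite_top \<open>C \<subseteq> L\<close>] card_up_set_meets_bottom(2)[OF D \<open>D \<inter> B \<noteq> {}\<close>] by simp
    ultimately show ?thesis by simp
  next
    assume "C \<inter> B \<noteq> {}" "D \<subseteq> L"
    have "pi_poly le \<tau> \<eta> (B \<union> L) D \<noteq> pi_poly le \<tau> \<eta> (B \<union> L) C"
      by (rule pi_poly_union_top_neq_meets_bottom[OF \<tau> \<eta>_top bottom \<open>D \<subseteq> L\<close> C \<open>C \<inter> B \<noteq> {}\<close>])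
    moreover have "card D \<noteq> card C"
      using card_mono[OF finite_top \<open>D \<subseteq> L\<close>] card_up_set_meets_bottom(2)[OF C \<open>C \<inter> B \<noteq> {}\<close>] by simp
    ultimately show ?thesis by metis
  qed
qed

end

lemma antichain_on_top_max_level:
  fixes f :: "'a \<Rightarrow> nat"
  assumes fin: "finite \<Omega>" and le_iff: "\<forall>x\<in>\<Omega>. \<forall>y\<in>\<Omega>. le x y \<longleftrightarrow> x = y \<or> f x < f y"
  defines "L \<equiv> {x\<in>\<Omega>. f x = Max (f ` \<Omega>)}"
  shows "antichain_on_top le (\<Omega> - L) L"
proof
  fix x y assume "x \<in> \<Omega> - L" "y \<in> L"
  moreover from this have "f x \<le> Max (f ` \<Omega>)" using fin by simp
  ultimately have "x \<in> \<Omega>" "y \<in> \<Omega>" "f x < f y" unfolding L_def by auto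
  then show "le x y" using le_iff by blast
next
  fix y z assume "y \<in> L" "z \<in> \<Omega> - L \<union> L" "le y z"
  then have "y \<in> \<Omega>" "z \<in> \<Omega>" unfolding L_def by auto
  then have "y = z \<or> f y < f z" using le_iff \<open>le y z\<close> by blast
  moreover have "f z \<le> f y" using fin \<open>z \<in> \<Omega>\<close> \<open>y \<in> L\<close> unfolding L_def by simp
  ultimately show "z = y" by auto
qed (use fin in \<open>auto simp: L_def\<close>)

lemma pi_poly_eq_iff_card_eq_if_graded:
  fixes f :: "'a \<Rightarrow> nat" and \<tau> \<eta> :: "'a \<Rightarrow> 'k::field"
  assumes "finite \<Omega>"
    and "\<forall>x\<in>\<Omega>. \<forall>y\<in>\<Omega>. le x y \<longleftrightarrow> x = y \<or> f x < f y"
    and "\<forall>x\<in>\<Omega>. \<forall>y\<in>\<Omega>. f x = f y \<longrightarrow> \<eta> x = \<eta> y"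
    and "\<forall>i\<in>\<Omega>. \<tau> i \<noteq> 0" and "\<forall>i\<in>\<Omega>. \<eta> i \<noteq> -1"
  shows "\<forall>C\<in>up_sets le \<Omega>. \<forall>D\<in>up_sets le \<Omega>.
    pi_poly le \<tau> \<eta> \<Omega> C = pi_poly le \<tau> \<eta> \<Omega> D \<longleftrightarrow> card C = card D"
  using assms
proof (induction "card \<Omega>" arbitrary: \<Omega> rule: less_induct)
  case less
  note fin = less.prems(1) and le_iff = less.prems(2) and \<eta>_level = less.prems(3)
    and \<tau> = less.prems(4) and \<eta> = less.prems(5)
  show ?case
  proof (cases "\<Omega> = {}")
    case True
    then show ?thesis by (simp add: up_sets_def)
  next
    case False
    define L where "L = {x\<in>\<Omega>. f x = Max (f ` \<Omega>)}"
    define B where "B = \<Omega> - L"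
    interpret antichain_on_top le B L
      unfolding B_def L_def by (rule antichain_on_top_max_level[OF fin le_iff])
    have "Max (f ` \<Omega>) \<in> f ` \<Omega>" using fin False by simp
    then obtain l where "Max (f ` \<Omega>) = f l" "l \<in> \<Omega>" by (rule imageE)
    then have l: "l \<in> L" unfolding L_def by simp
    have "\<forall>C\<in>up_sets le B. \<forall>D\<in>up_sets le B.
      pi_poly le \<tau> \<eta> B C = pi_poly le \<tau> \<eta> B D \<longleftrightarrow> card C = card D"
    proof (rule less.hyps)
      have "B \<subset> \<Omega>" using l unfolding B_def L_def by blast
      then show "card B < card \<Omega>" using fin by (rule psubset_card_mono[rotated])
      show "finite B" using fin unfolding B_def by simp
      show "\<forall>x\<in>B. \<forall>y\<in>B. le x y \<longleftrightarrow> x = y \<or> f x < f y" using le_iff unfolding B_def by blast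
      show "\<forall>x\<in>B. \<forall>y\<in>B. f x = f y \<longrightarrow> \<eta> x = \<eta> y" using \<eta>_level unfolding B_def by blast
      show "\<forall>i\<in>B. \<tau> i \<noteq> 0" "\<forall>i\<in>B. \<eta> i \<noteq> -1" using \<tau> \<eta> unfolding B_def by blast+
    qed
    moreover have "\<forall>x\<in>L. \<eta> x = \<eta> l" using \<eta>_level l unfolding L_def by auto
    moreover have "\<forall>x\<in>B. \<tau> x \<noteq> 0" "\<eta> l \<noteq> -1" using \<tau> \<eta> l unfolding B_def L_def by auto
    moreover have "\<Omega> = B \<union> L" unfolding B_def L_def by blast
    ultimately show ?thesis using pi_poly_union_eq_iff_card_eq[where e = "\<eta> l"] by blast
  qed
qed

theorem theorem3p3:
  fixes \<Omega> :: "'a set" and le :: "'a \<Rightarrow> 'a \<Rightarrow> bool"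
    and \<tau> \<eta> :: "'a \<Rightarrow> 'k::field"
  assumes "finite \<Omega>" and "poset_on \<Omega> le"
    and "\<forall>i\<in>\<Omega>. \<tau> i \<noteq> 0" and "\<forall>i\<in>\<Omega>. \<eta> i \<noteq> -1"
  shows "((\<forall>C\<in>up_sets le \<Omega>. \<forall>D\<in>up_sets le \<Omega>.
             card C = card D \<longrightarrow> pi_poly le \<tau> \<eta> \<Omega> C = pi_poly le \<tau> \<eta> \<Omega> D)
          \<longleftrightarrow>
          (\<forall>C\<in>up_sets le \<Omega>. \<forall>D\<in>up_sets le \<Omega>.
             pi_poly le \<tau> \<eta> \<Omega> C = pi_poly le \<tau> \<eta> \<Omega> D \<longleftrightarrow> card C = card D))
       \<and>
         ((\<forall>C\<in>up_sets le \<Omega>. \<forall>D\<in>up_sets le \<Omega>.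
             pi_poly le \<tau> \<eta> \<Omega> C = pi_poly le \<tau> \<eta> \<Omega> D \<longleftrightarrow> card C = card D)
          \<longleftrightarrow>
          (hierarchical \<Omega> le \<and>
           (\<forall>u\<in>\<Omega>. \<forall>v\<in>\<Omega>. len \<Omega> le u = len \<Omega> le v \<longrightarrow> \<eta> u = \<eta> v)))"
proof -
  let ?card_imp_pi = "\<forall>C\<in>up_sets le \<Omega>. \<forall>D\<in>up_sets le \<Omega>.
    card C = card D \<longrightarrow> pi_poly le \<tau> \<eta> \<Omega> C = pi_poly le \<tau> \<eta> \<Omega> D"
  let ?pi_iff_card = "\<forall>C\<in>up_sets le \<Omega>. \<forall>D\<in>up_sets le \<Omega>.
    pi_poly le \<tau> \<eta> \<Omega> C = pi_poly le \<tau> \<eta> \<Omega> D \<longleftrightarrow> card C = card D"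
  let ?hierarchical = "hierarchical \<Omega> le \<and>
    (\<forall>u\<in>\<Omega>. \<forall>v\<in>\<Omega>. len \<Omega> le u = len \<Omega> le v \<longrightarrow> \<eta> u = \<eta> v)"
  have "?card_imp_pi \<Longrightarrow> ?hierarchical"
    using card_eq_imp_pi_poly_eq_hierarchical[OF assms] by blast
  moreover have "?pi_iff_card" if hier: "?hierarchical"
  proof (rule pi_poly_eq_iff_card_eq_if_graded[OF assms(1) _ _ assms(3,4)])
    show "\<forall>x\<in>\<Omega>. \<forall>y\<in>\<Omega>. le x y \<longleftrightarrow> x = y \<or> len \<Omega> le x < len \<Omega> le y"
      using hierarchical_le_iff[OF assms(1,2)] hier by blast
  qed (use hier in blast)
  moreover have "?pi_iff_card \<Longrightarrow> ?card_imp_pi" by blast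
  ultimately show ?thesis by blast
qed

end
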